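(* The category $\mathsf{HSLat}$ does not satisfy normality of unions: there exist a Heyting semilattice $A$ and sub-Heyting semilattices $X\le B\le A$, $X\le C\le A$ such that $X$ is a normal subobject of $B$ and of $C$, but $X$ is not a normal subobject of the join $B\vee C$ in $A$. (For instance $A=C_4\times C_4$ with $C_4=\{0<1<2<3\}$, $X=\{(2,2),(3,3)\}$, $B=\{(0,1),(2,2),(3,3)\}$, $C=\{(1,0),(2,2),(3,3)\}$.) Consequently, normalisers do not exist in general in $\mathsf{HSLat}$.
   Context: A Heyting semilattice is a meet-semilattice with top $1$ and an operation $\Rightarrow$ with $x\wedge y\le z$ iff $x\le y\Rightarrow z$; morphisms preserve $1,\wedge,\Rightarrow$. A finite chain is a Heyting semilattice, and products are computed componentwise. A normal subobject is a kernel; in $\mathsf{HSLat}$ the normal subobjects of $A$ are exactly the filters of $A$ (non-empty, closed under $\wedge$, up-closed). A semi-abelian category satisfies normality of unions if, whenever $X\le B\le A$ and $X\le C\le A$ are subobjects with $X$ normal in both $B$ and $C$, then $X$ is normal in the join $B\vee C$ of subobjects of $A$. The normaliser of a subobject $X\le A$ is the largest subobject of $A$ in which $X$ is normal. *)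

theory Defs
  imports Main
begin

record 'a hsl =
  carrier :: "'a set"
  meet :: "'a \<Rightarrow> 'a \<Rightarrow> 'a"
  imp :: "'a \<Rightarrow> 'a \<Rightarrow> 'a"
  top :: 'a

definition hsl_le :: "('a, 'b) hsl_scheme \<Rightarrow> 'a \<Rightarrow> 'a \<Rightarrow> bool" where
  "hsl_le A x y \<longleftrightarrow> meet A x y = x"

definition heyting_semilattice :: "('a, 'b) hsl_scheme \<Rightarrow> bool" where
  "heyting_semilattice A \<longleftrightarrow>
     top A \<in> carrier A \<and>
     (\<forall>x\<in>carrier A. \<forall>y\<in>carrier A. meet A x y \<in> carrier A \<and> imp A x y \<in> carrier A) \<and>
     (\<forall>x\<in>carrier A. meet A x x = x) \<and>
     (\<forall>x\<in>carrier A. \<forall>y\<in>carrier A. meet A x y = meet A y x) \<and>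
     (\<forall>x\<in>carrier A. \<forall>y\<in>carrier A. \<forall>z\<in>carrier A.
        meet A (meet A x y) z = meet A x (meet A y z)) \<and>
     (\<forall>x\<in>carrier A. meet A x (top A) = x) \<and>
     (\<forall>x\<in>carrier A. \<forall>y\<in>carrier A. \<forall>z\<in>carrier A.
        hsl_le A (meet A x y) z \<longleftrightarrow> hsl_le A x (imp A y z))"

definition subalg :: "('a, 'b) hsl_scheme \<Rightarrow> 'a set \<Rightarrow> bool" where
  "subalg A S \<longleftrightarrow> S \<subseteq> carrier A \<and> top A \<in> S \<and>
     (\<forall>x\<in>S. \<forall>y\<in>S. meet A x y \<in> S \<and> imp A x y \<in> S)"

definition join_sub :: "('a, 'b) hsl_scheme \<Rightarrow> 'a set \<Rightarrow> 'a set \<Rightarrow> 'a set" where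
  "join_sub A B C = \<Inter>{S. subalg A S \<and> B \<union> C \<subseteq> S}"

text \<open>X is a filter of the subalgebra S (i.e. X is a normal subobject of S).\<close>
definition filter_in :: "('a, 'b) hsl_scheme \<Rightarrow> 'a set \<Rightarrow> 'a set \<Rightarrow> bool" where
  "filter_in A S X \<longleftrightarrow> X \<subseteq> S \<and> X \<noteq> {} \<and>
     (\<forall>x\<in>X. \<forall>y\<in>X. meet A x y \<in> X) \<and>
     (\<forall>x\<in>X. \<forall>y\<in>S. hsl_le A x y \<longrightarrow> y \<in> X)"

definition is_normaliser :: "('a, 'b) hsl_scheme \<Rightarrow> 'a set \<Rightarrow> 'a set \<Rightarrow> bool" where
  "is_normaliser A X N \<longleftrightarrow> subalg A N \<and> filter_in A N X \<and>
     (\<forall>M. subalg A M \<and> filter_in A M X \<longrightarrow> M \<subseteq> N)"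

end

theory Submission
  imports Defs
begin

text \<open>
  In \<open>C\<^sub>4 \<times> C\<^sub>4\<close> the set \<open>X = {(2,2),(3,3)}\<close> is a filter of
  \<open>B = X \<union> {(0,1)}\<close> and of \<open>C = X \<union> {(1,0)}\<close>, since nothing in \<open>B\<close> or \<open>C\<close>
  outside \<open>X\<close> lies above \<open>(2,2)\<close>. But the join of \<open>B\<close> and \<open>C\<close> contains
  \<open>((0,1) \<Rightarrow> (1,0)) \<Rightarrow> (2,2) = (3,0) \<Rightarrow> (2,2) = (2,3)\<close>, which lies above \<open>(2,2)\<close>
  without being in \<open>X\<close>. A normaliser of \<open>X\<close> would contain \<open>B\<close> and \<open>C\<close>, hence
  their join, and \<open>X\<close> would then be a filter of the join.
\<close>

definition chain_hsl :: "'a::linorder \<Rightarrow> 'a hsl" where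
  "chain_hsl t = \<lparr> carrier = {..t}, meet = min,
                   imp = (\<lambda>x y. if x \<le> y then t else y), top = t \<rparr>"

definition prod_hsl :: "('a, 'c) hsl_scheme \<Rightarrow> ('b, 'd) hsl_scheme \<Rightarrow> ('a \<times> 'b) hsl" where
  "prod_hsl A B = \<lparr> carrier = carrier A \<times> carrier B,
                    meet = (\<lambda>p q. (meet A (fst p) (fst q), meet B (snd p) (snd q))),
                    imp = (\<lambda>p q. (imp A (fst p) (fst q), imp B (snd p) (snd q))),
                    top = (top A, top B) \<rparr>"

lemma hsl_le_chain_hsl [simp]: "hsl_le (chain_hsl t) x y \<longleftrightarrow> x \<le> y"
  by (auto simp: hsl_le_def chain_hsl_def min_def)

lemma hsl_le_prod_hsl [simp]:
  "hsl_le (prod_hsl A B) p q \<longleftrightarrow> hsl_le A (fst p) (fst q) \<and> hsl_le B (snd p) (snd q)"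
  by (auto simp: hsl_le_def prod_hsl_def prod_eq_iff)

lemma heyting_semilattice_chain_hsl: "heyting_semilattice (chain_hsl t)"
proof -
  have "min x y \<le> z \<longleftrightarrow> x \<le> (if y \<le> z then t else z)" if "x \<le> t" for x y z :: 'a
    using that by (auto simp: min_def)
  then show ?thesis
    unfolding heyting_semilattice_def hsl_le_chain_hsl
    by (auto simp: chain_hsl_def min_def)
qed

lemma heyting_semilattice_prod_hsl:
  assumes "heyting_semilattice A" "heyting_semilattice B"
  shows "heyting_semilattice (prod_hsl A B)"
  using assms unfolding heyting_semilattice_def hsl_le_prod_hsl
  by (auto simp: prod_hsl_def)

lemma join_sub_upper: "B \<union> C \<subseteq> join_sub A B C"
  by (auto simp: join_sub_def)

lemma join_sub_least: "subalg A S \<Longrightarrow> B \<union> C \<subseteq> S \<Longrightarrow> join_sub A B C \<subseteq> S"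
  by (auto simp: join_sub_def)

lemma join_sub_imp_closed:
  "x \<in> join_sub A B C \<Longrightarrow> y \<in> join_sub A B C \<Longrightarrow> imp A x y \<in> join_sub A B C"
  by (auto simp: join_sub_def subalg_def)

lemma filter_in_upward_closed:
  "filter_in A S X \<Longrightarrow> x \<in> X \<Longrightarrow> y \<in> S \<Longrightarrow> hsl_le A x y \<Longrightarrow> y \<in> X"
  by (auto simp: filter_in_def)

lemma filter_in_subset:
  "filter_in A N X \<Longrightarrow> X \<subseteq> S \<Longrightarrow> S \<subseteq> N \<Longrightarrow> filter_in A S X"
  by (auto simp: filter_in_def)

lemma no_normaliser_if_not_normal_in_join:
  assumes "subalg A B" "subalg A C" "filter_in A B X" "filter_in A C X"
    and "\<not> filter_in A (join_sub A B C) X"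
  shows "\<not> (\<exists>N. is_normaliser A X N)"
proof
  assume "\<exists>N. is_normaliser A X N"
  then obtain N where N: "subalg A N" "filter_in A N X"
    and largest: "\<And>M. subalg A M \<Longrightarrow> filter_in A M X \<Longrightarrow> M \<subseteq> N"
    unfolding is_normaliser_def by blast
  have "B \<subseteq> N" "C \<subseteq> N"
    using assms(1-4) by (simp_all add: largest)
  then have join_le: "join_sub A B C \<subseteq> N"
    by (simp add: N(1) join_sub_least)
  have "X \<subseteq> B"
    using assms(3) by (simp add: filter_in_def)
  then have X_le: "X \<subseteq> join_sub A B C"
    using join_sub_upper[of B C A] by blast
  from N(2) X_le join_le have "filter_in A (join_sub A B C) X"
    by (rule filter_in_subset)
  with assms(5) show False ..
qed

abbreviation C4xC4 :: "(nat \<times> nat) hsl" where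
  "C4xC4 \<equiv> prod_hsl (chain_hsl 3) (chain_hsl 3)"

abbreviation X0 :: "(nat \<times> nat) set" where "X0 \<equiv> {(2,2), (3,3)}"
abbreviation B0 :: "(nat \<times> nat) set" where "B0 \<equiv> insert (0,1) X0"
abbreviation C0 :: "(nat \<times> nat) set" where "C0 \<equiv> insert (1,0) X0"

lemma subalgs_C4xC4: "subalg C4xC4 X0" "subalg C4xC4 B0" "subalg C4xC4 C0"
  by (auto simp: subalg_def prod_hsl_def chain_hsl_def)

lemma filters_C4xC4: "filter_in C4xC4 B0 X0" "filter_in C4xC4 C0 X0"
  unfolding filter_in_def hsl_le_prod_hsl hsl_le_chain_hsl
  by (auto simp: prod_hsl_def chain_hsl_def)

lemma not_filter_in_join: "\<not> filter_in C4xC4 (join_sub C4xC4 B0 C0) X0"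
proof
  let ?J = "join_sub C4xC4 B0 C0"
  assume filter: "filter_in C4xC4 ?J X0"
  have generators: "(0,1) \<in> ?J" "(1,0) \<in> ?J" "(2,2) \<in> ?J"
    using join_sub_upper[of B0 C0 C4xC4] by auto
  have "imp C4xC4 (imp C4xC4 (0,1) (1,0)) (2,2) \<in> ?J"
    using generators by (intro join_sub_imp_closed)
  then have "(2,3) \<in> ?J"
    by (simp add: prod_hsl_def chain_hsl_def)
  with filter_in_upward_closed[OF filter, of "(2,2)" "(2,3)"] show False
    by simp
qed

theorem mainTheorem5:
  shows "(\<exists>(A :: (nat \<times> nat) hsl) X B C.
            heyting_semilattice A \<and> subalg A X \<and> subalg A B \<and> subalg A C \<and>
            X \<subseteq> B \<and> X \<subseteq> C \<and> filter_in A B X \<and> filter_in A C X \<and>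
            \<not> filter_in A (join_sub A B C) X)
       \<and> (\<exists>(A :: (nat \<times> nat) hsl) X.
            heyting_semilattice A \<and> subalg A X \<and> \<not> (\<exists>N. is_normaliser A X N))"
proof -
  have "heyting_semilattice C4xC4"
    by (intro heyting_semilattice_prod_hsl heyting_semilattice_chain_hsl)
  moreover have "\<not> (\<exists>N. is_normaliser C4xC4 X0 N)"
    using subalgs_C4xC4(2,3) filters_C4xC4 not_filter_in_join
    by (rule no_normaliser_if_not_normal_in_join)
  moreover have "X0 \<subseteq> B0" "X0 \<subseteq> C0"
    by auto
  ultimately show ?thesis
    using subalgs_C4xC4 filters_C4xC4 not_filter_in_join by blast
qed

end
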